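(* Let $t,\ell,m$ be integers with $1 \le t \le \ell \le m$, and let $s$ be an integer with $(\ell-t)m \le s \le \ell m$ and $s\ge 1$. Then the $s$-th generalized Hamming weight of $\widehat{C}_{\det}(t;\ell,m)$ is $$\hat{d}_s=\hat{n}-\sum_{i=0}^{\ell m-s-1}q^i,$$ where $\hat n=|\widehat{\mathcal D}_t(\ell,m)|$ is the length of the code (the sum is empty, i.e. $0$, when $s=\ell m$).
   Context: $q$ is a prime power. Let $\widehat{\mathcal D}_t(\ell,m)\subset\mathbb{P}^{\ell m-1}(\mathbb{F}_q)=\mathbb{P}(\mathrm{Mat}_{\ell\times m}(\mathbb{F}_q))$ be the set of points $[M]$ with $M\ne 0$ and $\mathrm{rk}(M)\le t$; let $\hat n=|\widehat{\mathcal D}_t(\ell,m)|$, enumerate its points and choose representatives $M_1,\dots,M_{\hat n}$. The determinantal code $\widehat{C}_{\det}(t;\ell,m)\subseteq\mathbb{F}_q^{\hat n}$ is the set of vectors $(f(M_1),\dots,f(M_{\hat n}))$ for $f$ ranging over linear forms in the entries of an $\ell\times m$ matrix of indeterminates; it has dimension $\ell m$. For a linear code $C\subseteq\mathbb{F}_q^n$ and a subspace $D\subseteq C$, the support weight $\|D\|$ is the number of coordinates $i$ such that some $c\in D$ has $c_i\ne0$; the $s$-th generalized Hamming weight is $d_s(C)=\min\{\|D\|: D\subseteq C \text{ a subspace}, \dim D=s\}$. *)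

theory Defs
  imports "HOL-Analysis.Analysis" "HOL-Library.Function_Algebras"
begin

text \<open>Matrices of size l x m over a finite field 'a are elements of 'a^'m^'l,
  with l = CARD('l) rows and m = CARD('m) columns.\<close>

definition smat :: "'a::field \<Rightarrow> 'a^'m^'l \<Rightarrow> 'a^'m^'l" where
  "smat c M = (\<chi> i j. c * M$i$j)"

definition proj_pt :: "'a::field^'m^'l \<Rightarrow> ('a^'m^'l) set" where
  "proj_pt M = {smat c M | c. c \<noteq> 0}"

definition Dhat :: "nat \<Rightarrow> ('a::field^'m^'l) set set" where
  "Dhat t = {proj_pt M | M. M \<noteq> 0 \<and> rank M \<le> t}"

definition rep_system :: "nat \<Rightarrow> ('a::field^'m^'l) set \<Rightarrow> bool" where
  "rep_system t R \<longleftrightarrow> bij_betw proj_pt R (Dhat t)"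

definition lin_form :: "'a::field^'m^'l \<Rightarrow> 'a^'m^'l \<Rightarrow> 'a" where
  "lin_form C M = (\<Sum>i\<in>UNIV. \<Sum>j\<in>UNIV. C$i$j * M$i$j)"

text \<open>Codewords are functions from the coordinate set R to the field
  (extended by 0 outside R). Scalar multiplication is pointwise.\<close>
definition fscale :: "'a::field \<Rightarrow> ('b \<Rightarrow> 'a) \<Rightarrow> ('b \<Rightarrow> 'a)" where
  "fscale c f = (\<lambda>x. c * f x)"

definition det_code :: "('a::field^'m^'l) set \<Rightarrow> ('a^'m^'l \<Rightarrow> 'a) set" where
  "det_code R = {(\<lambda>M. if M \<in> R then lin_form C M else 0) | C. True}"

definition support_weight :: "'b set \<Rightarrow> ('b \<Rightarrow> 'a::zero) set \<Rightarrow> nat" where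
  "support_weight R D = card {x \<in> R. \<exists>c\<in>D. c x \<noteq> 0}"

definition ghw :: "'b set \<Rightarrow> ('b \<Rightarrow> 'a::field) set \<Rightarrow> nat \<Rightarrow> nat" where
  "ghw R C s = Min {support_weight R D | D. D \<subseteq> C \<and> module.subspace fscale D
                      \<and> vector_space.dim fscale D = s}"

end

theory Submission
  imports Defs
begin

text \<open>An \<open>s\<close>-dimensional subcode \<open>D\<close> is the image of an \<open>s\<close>-dimensional space \<open>Q\<close> of
  coefficient matrices, and the coordinates on which all of \<open>D\<close> vanishes are the representatives
  lying in the annihilator \<open>W\<close> of \<open>Q\<close>. A counting argument shows \<open>dim W \<le> \<ell>m - s\<close>, and each point
  of \<open>\<bbbP>(W)\<close> has at most one representative, so at most \<open>(q\<^bsup>\<ell>m-s\<^esup> - 1)/(q - 1)\<close> coordinates vanish.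
  Conversely, if \<open>\<ell>m - s \<le> tm\<close>, let \<open>Q\<close> be the matrices vanishing on a set \<open>S\<close> of \<open>\<ell>m - s\<close>
  positions inside \<open>t\<close> rows. Then \<open>W\<close> consists of the matrices supported on \<open>S\<close>, all of rank at
  most \<open>t\<close>, so every point of \<open>\<bbbP>(W)\<close> is a coordinate and the bound is attained.\<close>

lemma vector_space_smat: "vector_space (smat :: 'a::field \<Rightarrow> 'a^'m^'l \<Rightarrow> _)"
  unfolding vector_space_def module_def smat_def
  by (auto simp: vec_eq_iff algebra_simps)

lemma vector_space_fscale: "vector_space (fscale :: 'a::field \<Rightarrow> ('b \<Rightarrow> 'a) \<Rightarrow> _)"
  unfolding vector_space_def module_def fscale_def
  by (auto simp: fun_eq_iff algebra_simps)

lemma card_field_gt_1: "1 < CARD('a::{finite,field})"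
proof -
  have "card {0::'a, 1} \<le> CARD('a)" by (rule card_mono) auto
  then show ?thesis by simp
qed

lemma power_diff_1_eq_nat: "x ^ n - 1 = (x - 1) * (\<Sum>i<n. x ^ i :: nat)"
proof (cases "x = 0")
  case False
  then have "int (x ^ n - 1) = int ((x - 1) * (\<Sum>i<n. x ^ i))"
    using power_diff_1_eq[of "int x" n] by (simp add: of_nat_diff)
  then show ?thesis by linarith
qed (cases n, simp_all)

lemma card_subspace_finite_field:
  fixes scale :: "'a::{finite,field} \<Rightarrow> 'b::ab_group_add \<Rightarrow> 'b"
  assumes vs: "vector_space scale" and sub: "module.subspace scale X" and fin: "finite X"
  shows "card X = CARD('a) ^ vector_space.dim scale X"
proof -
  interpret v: vector_space scale by (rule vs)
  obtain B where B: "B \<subseteq> X" "v.independent B" "X \<subseteq> v.span B" "card B = v.dim X"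
    using v.basis_exists by blast
  have fin_B: "finite B" using B(1) fin finite_subset by blast
  have span_B: "v.span B = X" using B sub v.span_subspace by blast
  define comb where "comb u = (\<Sum>b\<in>B. scale (u b) b)" for u
  have "comb ` (B \<rightarrow>\<^sub>E UNIV) = X"
  proof
    show "comb ` (B \<rightarrow>\<^sub>E UNIV) \<subseteq> X"
      using v.span_finite[OF fin_B] span_B comb_def by auto
    show "X \<subseteq> comb ` (B \<rightarrow>\<^sub>E UNIV)"
    proof
      fix x assume "x \<in> X"
      then obtain u where "x = comb u" using v.span_finite[OF fin_B] span_B comb_def by auto
      moreover have "comb u = comb (restrict u B)" unfolding comb_def by (rule sum.cong) auto
      ultimately show "x \<in> comb ` (B \<rightarrow>\<^sub>E UNIV)" by auto
    qed
  qed
  moreover have "inj_on comb (B \<rightarrow>\<^sub>E UNIV)"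
  proof (rule inj_onI)
    fix u w assume u: "u \<in> B \<rightarrow>\<^sub>E UNIV" and w: "w \<in> B \<rightarrow>\<^sub>E UNIV" and eq: "comb u = comb w"
    have "(\<Sum>b\<in>B. scale (u b - w b) b) = 0"
      using eq unfolding comb_def by (simp add: v.scale_left_diff_distrib sum_subtractf)
    then have "\<forall>b\<in>B. u b - w b = 0"
      using v.independentD[OF B(2) fin_B subset_refl, of "\<lambda>b. u b - w b"] by blast
    then show "u = w" using PiE_ext[OF u w] by simp
  qed
  ultimately have "card X = card (B \<rightarrow>\<^sub>E (UNIV :: 'a set))" using card_image by fastforce
  then show ?thesis using B(4) by (simp add: card_PiE fin_B)
qed

lemma dim_subspace_finite_field_eqI:
  fixes scale :: "'a::{finite,field} \<Rightarrow> 'b::ab_group_add \<Rightarrow> 'b"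
  assumes "vector_space scale" and "module.subspace scale X" and "finite X"
    and "card X = CARD('a) ^ n"
  shows "vector_space.dim scale X = n"
  using card_subspace_finite_field[OF assms(1-3)] assms(4) power_inject_exp card_field_gt_1
  by metis

lemma smat_eq_0_iff: "smat c M = 0 \<longleftrightarrow> c = 0 \<or> M = 0"
  unfolding smat_def by (auto simp: vec_eq_iff)

lemma smat_smat [simp]: "smat a (smat b M) = smat (a * b) M"
  unfolding smat_def by (simp add: vec_eq_iff mult.assoc)

lemma smat_one [simp]: "smat 1 M = M"
  unfolding smat_def by (simp add: vec_eq_iff)

definition mat_unit :: "'l \<Rightarrow> 'm \<Rightarrow> 'a::field^'m^'l" where
  "mat_unit i j = (\<chi> a b. if a = i \<and> b = j then 1 else 0)"

lemma mat_unit_nonzero: "(mat_unit i j :: 'a::field^'m^'l) \<noteq> 0"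
  unfolding mat_unit_def by (auto simp: vec_eq_iff)

lemma sum_sum_delta:
  fixes i :: "'i::finite" and j :: "'j::finite"
  shows "(\<Sum>a\<in>UNIV. \<Sum>b\<in>UNIV. if a = i \<and> b = j then f a b else (0::'a::comm_monoid_add)) = f i j"
proof -
  have "(\<Sum>b\<in>UNIV. if a = i \<and> b = j then f a b else 0) = (if a = i then f a j else 0)" for a
    by (cases "a = i") simp_all
  then show ?thesis by (simp add: sum.delta)
qed

lemma lin_form_mat_unit_left [simp]: "lin_form (mat_unit i j) M = M$i$j"
  unfolding lin_form_def mat_unit_def
  by (simp add: if_distrib if_distribR sum_sum_delta cong: if_cong)

lemma lin_form_mat_unit_right [simp]: "lin_form C (mat_unit i j) = C$i$j"
  unfolding lin_form_def mat_unit_def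
  by (simp add: if_distrib if_distribR sum_sum_delta cong: if_cong)

lemma lin_form_smat_right [simp]: "lin_form C (smat c M) = c * lin_form C M"
  unfolding lin_form_def smat_def by (simp add: sum_distrib_left algebra_simps)

lemma lin_form_smat_left [simp]: "lin_form (smat c C) M = c * lin_form C M"
  unfolding lin_form_def smat_def by (simp add: sum_distrib_left algebra_simps)

lemma lin_form_zero_right [simp]: "lin_form C 0 = 0"
  unfolding lin_form_def by simp

lemma lin_form_add_left [simp]: "lin_form (C + D) M = lin_form C M + lin_form D M"
  unfolding lin_form_def by (simp add: sum.distrib algebra_simps)

lemma lin_form_add_right [simp]: "lin_form C (M + N) = lin_form C M + lin_form C N"
  unfolding lin_form_def by (simp add: sum.distrib algebra_simps)

lemma matrix_eq_sum_mat_units: "M = (\<Sum>i\<in>UNIV. \<Sum>j\<in>UNIV. smat (M$i$j) (mat_unit i j))"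
proof -
  have "(\<Sum>i\<in>UNIV. \<Sum>j\<in>UNIV. smat (M$i$j) (mat_unit i j)) $ a $ b = M $ a $ b" for a b
  proof -
    have "(\<Sum>i\<in>UNIV. \<Sum>j\<in>UNIV. smat (M$i$j) (mat_unit i j)) $ a $ b
        = (\<Sum>i\<in>UNIV. \<Sum>j\<in>UNIV. if i = a \<and> j = b then M$i$j else 0)"
      by (auto simp: smat_def mat_unit_def sum_component intro!: sum.cong)
    then show ?thesis by (simp add: sum_sum_delta)
  qed
  then show ?thesis by (simp add: vec_eq_iff)
qed

lemma ex_lin_form_interpolating:
  fixes B :: "('a::field^'m^'l) set"
  assumes "module.independent smat B"
  shows "\<exists>C. \<forall>b\<in>B. lin_form C b = g b"
proof -
  interpret p: vector_space_pair smat "(*) :: 'a \<Rightarrow> 'a \<Rightarrow> 'a"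
    using vector_space_smat vector_space_over_itself.vector_space_axioms
    by (simp add: vector_space_pair_def)
  obtain h where h: "Vector_Spaces.linear smat (*) h" "\<forall>b\<in>B. h b = g b"
    using p.linear_independent_extend[OF assms] by blast
  have "lin_form (\<chi> i j. h (mat_unit i j)) M = h M" for M :: "'a^'m^'l"
  proof -
    have "h M = h (\<Sum>i\<in>UNIV. \<Sum>j\<in>UNIV. smat (M$i$j) (mat_unit i j))"
      by (subst matrix_eq_sum_mat_units) (rule refl)
    also have "\<dots> = (\<Sum>i\<in>UNIV. \<Sum>j\<in>UNIV. M$i$j * h (mat_unit i j))"
      by (simp add: p.linear_sum[OF h(1)] p.linear_scale[OF h(1)])
    finally show ?thesis unfolding lin_form_def by (simp add: mult.commute)
  qed
  then show ?thesis using h(2) by metis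
qed

definition annihilator :: "('a::field^'m^'l) set \<Rightarrow> ('a^'m^'l) set" where
  "annihilator Q = {M. \<forall>C\<in>Q. lin_form C M = 0}"

lemma subspace_annihilator: "module.subspace smat (annihilator Q)"
proof -
  interpret vector_space "smat :: 'a \<Rightarrow> 'a^'m^'l \<Rightarrow> _" by (rule vector_space_smat)
  show ?thesis by (simp add: subspace_def annihilator_def)
qed

text \<open>This replaces \<open>dim Q + dim (annihilator Q) \<le> \<ell>m\<close>: with \<open>B\<close> a basis of the annihilator,
  \<open>(g, C) \<mapsto> C\<^sub>g + C\<close> is injective on \<open>(B \<rightarrow> \<bbbF>\<^sub>q) \<times> Q\<close>, where \<open>C\<^sub>g\<close> interpolates \<open>g\<close> on \<open>B\<close>.\<close>

lemma card_mult_card_annihilator_le: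
  fixes Q :: "('a::{finite,field}^'m^'l) set"
  shows "card Q * card (annihilator Q) \<le> CARD('a) ^ (CARD('l) * CARD('m))"
proof -
  interpret ms: vector_space "smat :: 'a \<Rightarrow> 'a^'m^'l \<Rightarrow> _" by (rule vector_space_smat)
  obtain B where B: "B \<subseteq> annihilator Q" "ms.independent B" "annihilator Q \<subseteq> ms.span B"
      "card B = ms.dim (annihilator Q)"
    by (rule ms.basis_exists)
  have card_W: "card (annihilator Q) = CARD('a) ^ card B"
    using card_subspace_finite_field[OF vector_space_smat subspace_annihilator] B(4) by simp
  have "\<forall>g. \<exists>C. \<forall>b\<in>B. lin_form C b = g b"
    using ex_lin_form_interpolating[OF B(2)] by blast
  then obtain interp where interp: "\<And>g b. b \<in> B \<Longrightarrow> lin_form (interp g) b = g b"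
    by (auto dest!: choice)
  have vanish: "\<And>C b. C \<in> Q \<Longrightarrow> b \<in> B \<Longrightarrow> lin_form C b = 0"
    using B(1) by (auto simp: annihilator_def)
  have "inj_on (\<lambda>(g, C). interp g + C) ((B \<rightarrow>\<^sub>E UNIV) \<times> Q)"
  proof (rule inj_onI, clarsimp)
    fix g g' C C' assume g: "g \<in> B \<rightarrow>\<^sub>E UNIV" "g' \<in> B \<rightarrow>\<^sub>E UNIV" and C: "C \<in> Q" "C' \<in> Q"
      and eq: "interp g + C = interp g' + C'"
    have "g b = g' b" if "b \<in> B" for b
      using arg_cong[OF eq, of "\<lambda>X. lin_form X b"] interp[OF that] vanish[OF C(1) that]
        vanish[OF C(2) that] by simp
    then have "g = g'" using PiE_ext[OF g] by blast
    then show "g = g' \<and> C = C'" using eq by simp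
  qed
  then have "card ((B \<rightarrow>\<^sub>E (UNIV :: 'a set)) \<times> Q) \<le> card (UNIV :: ('a^'m^'l) set)"
    by (rule card_inj_on_le[OF _ subset_UNIV finite])
  moreover have "card ((B \<rightarrow>\<^sub>E (UNIV :: 'a set)) \<times> Q) = card Q * card (annihilator Q)"
    using card_W by (simp add: card_PiE card_cartesian_product)
  moreover have "card (UNIV :: ('a^'m^'l) set) = CARD('a) ^ (CARD('l) * CARD('m))"
    by (simp flip: power_mult add: mult.commute)
  ultimately show ?thesis by simp
qed

definition supported_on :: "('l \<times> 'm) set \<Rightarrow> ('a::zero^'m^'l) set" where
  "supported_on P = {M. \<forall>i j. (i, j) \<notin> P \<longrightarrow> M$i$j = 0}"

lemma card_supported_on:
  "card (supported_on P :: ('a::{finite,zero}^'m^'l) set) = CARD('a) ^ card P"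
proof -
  define embed :: "('l \<times> 'm \<Rightarrow> 'a) \<Rightarrow> 'a^'m^'l"
    where "embed g = (\<chi> i j. if (i, j) \<in> P then g (i, j) else 0)" for g
  have "inj_on embed (P \<rightarrow>\<^sub>E UNIV)"
  proof (rule inj_onI)
    fix g h assume g: "g \<in> P \<rightarrow>\<^sub>E UNIV" and h: "h \<in> P \<rightarrow>\<^sub>E UNIV" and eq: "embed g = embed h"
    have "g p = h p" if "p \<in> P" for p
    proof -
      obtain i j where "p = (i, j)" by fastforce
      then show ?thesis using arg_cong[OF eq, of "\<lambda>M. M$i$j"] that by (simp add: embed_def)
    qed
    then show "g = h" using PiE_ext[OF g h] by blast
  qed
  moreover have "embed ` (P \<rightarrow>\<^sub>E UNIV) = supported_on P"
  proof
    show "embed ` (P \<rightarrow>\<^sub>E UNIV) \<subseteq> supported_on P"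
      by (auto simp: embed_def supported_on_def)
    show "supported_on P \<subseteq> embed ` (P \<rightarrow>\<^sub>E UNIV)"
    proof
      fix M :: "'a^'m^'l" assume "M \<in> supported_on P"
      then have "M = embed (restrict (\<lambda>(i, j). M$i$j) P)"
        by (auto simp: vec_eq_iff embed_def supported_on_def)
      moreover have "restrict (\<lambda>(i, j). M$i$j) P \<in> P \<rightarrow>\<^sub>E UNIV" by simp
      ultimately show "M \<in> embed ` (P \<rightarrow>\<^sub>E UNIV)" by blast
    qed
  qed
  ultimately have "card (supported_on P :: ('a^'m^'l) set) = card (P \<rightarrow>\<^sub>E (UNIV :: 'a set))"
    by (metis card_image)
  then show ?thesis by (simp add: card_PiE)
qed

lemma subspace_supported_on: "module.subspace smat (supported_on P :: ('a::field^'m^'l) set)"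
proof -
  interpret vector_space "smat :: 'a \<Rightarrow> 'a^'m^'l \<Rightarrow> _" by (rule vector_space_smat)
  show ?thesis by (simp add: subspace_def supported_on_def smat_def)
qed

lemma annihilator_supported_on:
  "annihilator (supported_on (- S)) = (supported_on S :: ('a::field^'m^'l) set)"
proof (intro equalityI subsetI)
  fix M :: "'a^'m^'l" assume M: "M \<in> annihilator (supported_on (- S))"
  have "M$i$j = 0" if "(i, j) \<notin> S" for i j
  proof -
    have "mat_unit i j \<in> (supported_on (- S) :: ('a^'m^'l) set)"
      using that by (auto simp: supported_on_def mat_unit_def)
    then show ?thesis using M by (auto simp: annihilator_def)
  qed
  then show "M \<in> supported_on S" by (simp add: supported_on_def)
next
  fix M :: "'a^'m^'l" assume "M \<in> supported_on S"
  then have "C$i$j * M$i$j = 0" if "C \<in> supported_on (- S)" for C i j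
    using that by (cases "(i, j) \<in> S") (auto simp: supported_on_def)
  then show "M \<in> annihilator (supported_on (- S))"
    by (auto simp: annihilator_def lin_form_def intro!: sum.neutral)
qed

lemma rank_le_card_rows:
  fixes M :: "'a::field^'m^'l"
  assumes "\<And>i j. i \<notin> T \<Longrightarrow> M$i$j = 0"
  shows "rank M \<le> card T"
proof -
  have "rows M \<subseteq> vec.span ((\<lambda>i. row i M) ` T)"
  proof
    fix x assume "x \<in> rows M"
    then obtain i where x: "x = row i M" unfolding rows_def by auto
    show "x \<in> vec.span ((\<lambda>i. row i M) ` T)"
    proof (cases "i \<in> T")
      case True then show ?thesis using x by (auto intro: vec.span_base)
    next
      case False
      then have "x = 0" using x assms by (simp add: row_def vec_eq_iff)
      then show ?thesis by (simp add: vec.span_zero)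
    qed
  qed
  then have "rank M \<le> card ((\<lambda>i. row i M) ` T)"
    unfolding row_rank_def_gen by (intro vec.dim_le_card) auto
  also have "\<dots> \<le> card T" by (rule card_image_le) auto
  finally show ?thesis .
qed

lemma proj_pt_self: "M \<in> proj_pt M"
  unfolding proj_pt_def by (auto intro!: exI[of _ 1])

lemma proj_pt_sym: "N \<in> proj_pt M \<Longrightarrow> M \<in> proj_pt N"
proof -
  assume "N \<in> proj_pt M"
  then obtain c where "c \<noteq> 0" "N = smat c M" unfolding proj_pt_def by auto
  then have "M = smat (inverse c) N" "inverse c \<noteq> 0" by simp_all
  then show ?thesis unfolding proj_pt_def by blast
qed

lemma proj_pt_subset: "N \<in> proj_pt M \<Longrightarrow> proj_pt N \<subseteq> proj_pt M"
proof
  fix X assume "N \<in> proj_pt M" "X \<in> proj_pt N"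
  then obtain c d where "c \<noteq> 0" "N = smat c M" "d \<noteq> 0" "X = smat d N"
    unfolding proj_pt_def by auto
  then have "X = smat (d * c) M" "d * c \<noteq> 0" by auto
  then show "X \<in> proj_pt M" unfolding proj_pt_def by blast
qed

lemma proj_pt_eq: "N \<in> proj_pt M \<Longrightarrow> proj_pt N = proj_pt M"
  using proj_pt_subset proj_pt_sym by blast

lemma card_proj_pt:
  assumes "(M :: 'a::{finite,field}^'m^'l) \<noteq> 0"
  shows "card (proj_pt M) = CARD('a) - 1"
proof -
  have "proj_pt M = (\<lambda>c. smat c M) ` (UNIV - {0})"
    unfolding proj_pt_def by auto
  moreover have "inj_on (\<lambda>c. smat c M) (UNIV - {0})"
  proof (rule inj_onI)
    fix a b assume "smat a M = smat b M"
    then have "smat (a - b) M = 0" unfolding smat_def by (auto simp: vec_eq_iff algebra_simps)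
    then show "a = b" using assms by (simp add: smat_eq_0_iff)
  qed
  ultimately show ?thesis by (simp add: card_image card_Diff_singleton)
qed

lemma card_Union_proj_pt:
  fixes Z :: "('a::{finite,field}^'m^'l) set"
  assumes "inj_on proj_pt Z" and "0 \<notin> Z"
  shows "card (\<Union> (proj_pt ` Z)) = card Z * (CARD('a) - 1)"
proof -
  have "card (\<Union> (proj_pt ` Z)) = (\<Sum>M\<in>Z. card (proj_pt M))"
  proof (rule card_UN_disjoint)
    show "\<forall>M\<in>Z. \<forall>M'\<in>Z. M \<noteq> M' \<longrightarrow> proj_pt M \<inter> proj_pt M' = {}"
    proof (intro ballI impI)
      fix M M' assume "M \<in> Z" "M' \<in> Z" "M \<noteq> M'"
      then have "proj_pt M \<noteq> proj_pt M'" using assms(1) by (auto dest: inj_onD)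
      then show "proj_pt M \<inter> proj_pt M' = {}" by (metis disjoint_iff proj_pt_eq)
    qed
  qed simp_all
  also have "\<dots> = (\<Sum>M\<in>Z. CARD('a) - 1)"
    using assms(2) by (intro sum.cong refl card_proj_pt) auto
  finally show ?thesis by simp
qed

lemma rep_system_nonzero:
  fixes R :: "('a::field^'m^'l) set"
  shows "rep_system t R \<Longrightarrow> 0 \<notin> R"
proof
  assume "rep_system t R" "0 \<in> R"
  then have "proj_pt (0 :: 'a^'m^'l) \<in> Dhat t" unfolding rep_system_def bij_betw_def by blast
  then obtain M :: "'a^'m^'l" where "M \<noteq> 0" "proj_pt 0 = proj_pt M" unfolding Dhat_def by blast
  then have "M \<in> proj_pt 0" using proj_pt_self[of M] by simp
  then show False using \<open>M \<noteq> 0\<close> by (auto simp: proj_pt_def smat_def vec_eq_iff)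
qed

lemma rep_system_ex_rep:
  assumes "rep_system t R" and "N \<noteq> 0" and "rank N \<le> t"
  shows "\<exists>M\<in>R. proj_pt M = proj_pt N"
proof -
  have "proj_pt N \<in> Dhat t" unfolding Dhat_def using assms by auto
  then show ?thesis using assms(1) unfolding rep_system_def bij_betw_def by (metis imageE)
qed

text \<open>Each point of \<open>\<bbbP>(W)\<close> contains at most one element of \<open>R\<close>, and exactly one when its
  rank is at most \<open>t\<close>.\<close>

lemma card_rep_system_inter_cone:
  fixes R :: "('a::{finite,field}^'m^'l) set"
  assumes rep: "rep_system t R" and cone: "\<And>M c. M \<in> W \<Longrightarrow> c \<noteq> 0 \<Longrightarrow> smat c M \<in> W"
  shows "card (R \<inter> W) * (CARD('a) - 1) \<le> card (W - {0})"
    and "(\<And>N. N \<in> W \<Longrightarrow> rank N \<le> t) \<Longrightarrow> card (R \<inter> W) * (CARD('a) - 1) = card (W - {0})"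
proof -
  have nonzero: "0 \<notin> R \<inter> W" using rep_system_nonzero[OF rep] by blast
  have "inj_on proj_pt (R \<inter> W)"
    using rep inj_on_subset[of proj_pt R] unfolding rep_system_def bij_betw_def by blast
  then have card_eq: "card (\<Union> (proj_pt ` (R \<inter> W))) = card (R \<inter> W) * (CARD('a) - 1)"
    using nonzero by (rule card_Union_proj_pt)
  have sub: "\<Union> (proj_pt ` (R \<inter> W)) \<subseteq> W - {0}"
  proof
    fix X assume "X \<in> \<Union> (proj_pt ` (R \<inter> W))"
    then obtain M c where "M \<in> R \<inter> W" "c \<noteq> 0" "X = smat c M" unfolding proj_pt_def by blast
    then show "X \<in> W - {0}" using cone nonzero by (auto simp: smat_eq_0_iff)
  qed
  then show "card (R \<inter> W) * (CARD('a) - 1) \<le> card (W - {0})"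
    unfolding card_eq[symmetric] by (rule card_mono[OF finite])
  assume low_rank: "\<And>N. N \<in> W \<Longrightarrow> rank N \<le> t"
  have "W - {0} \<subseteq> \<Union> (proj_pt ` (R \<inter> W))"
  proof
    fix N assume N: "N \<in> W - {0}"
    then obtain M where M: "M \<in> R" "proj_pt M = proj_pt N"
      using rep_system_ex_rep[OF rep] low_rank by blast
    then have "M \<in> W" using N cone proj_pt_self[of M] unfolding proj_pt_def by auto
    then show "N \<in> \<Union> (proj_pt ` (R \<inter> W))" using M proj_pt_self[of N] by auto
  qed
  then show "card (R \<inter> W) * (CARD('a) - 1) = card (W - {0})"
    using sub card_eq by simp
qed

definition codeword :: "('a::field^'m^'l) set \<Rightarrow> 'a^'m^'l \<Rightarrow> ('a^'m^'l \<Rightarrow> 'a)" where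
  "codeword R C = (\<lambda>M. if M \<in> R then lin_form C M else 0)"

lemma det_code_eq_range: "det_code R = range (codeword R)"
  unfolding det_code_def codeword_def by auto

lemma linear_codeword: "Vector_Spaces.linear smat fscale (codeword R)"
  by (auto simp: Vector_Spaces.linear_iff vector_space_smat vector_space_fscale codeword_def
      fscale_def fun_eq_iff)

text \<open>Each matrix unit has rank \<open>1 \<le> t\<close>, so its point is a coordinate and the codeword
  recovers the corresponding coefficient.\<close>

lemma inj_codeword:
  assumes "rep_system t R" and "1 \<le> t"
  shows "inj (codeword R :: 'a::field^'m^'l \<Rightarrow> _)"
proof (rule injI)
  fix C D :: "'a^'m^'l" assume eq: "codeword R C = codeword R D"
  have "C$i$j = D$i$j" for i j
  proof -
    have "rank (mat_unit i j :: 'a^'m^'l) \<le> card {i}"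
      by (rule rank_le_card_rows) (simp add: mat_unit_def)
    then have "rank (mat_unit i j :: 'a^'m^'l) \<le> t" using assms(2) by simp
    then obtain M where M: "M \<in> R" "proj_pt M = proj_pt (mat_unit i j)"
      using rep_system_ex_rep[OF assms(1) mat_unit_nonzero] by blast
    then obtain c where "c \<noteq> 0" "M = smat c (mat_unit i j)"
      using proj_pt_self[of M] unfolding proj_pt_def by auto
    then show ?thesis using M(1) fun_cong[OF eq, of M] by (simp add: codeword_def)
  qed
  then show "C = D" by (simp add: vec_eq_iff)
qed

definition zero_set :: "'b set \<Rightarrow> ('b \<Rightarrow> 'a::zero) set \<Rightarrow> 'b set" where
  "zero_set R D = {x \<in> R. \<forall>c\<in>D. c x = 0}"

lemma support_weight_eq_card_diff_zero_set:
  "finite R \<Longrightarrow> support_weight R D = card R - card (zero_set R D)"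
proof -
  have "{x \<in> R. \<exists>c\<in>D. c x \<noteq> 0} = R - zero_set R D" by (auto simp: zero_set_def)
  then show "finite R \<Longrightarrow> ?thesis"
    unfolding support_weight_def by (simp add: card_Diff_subset zero_set_def)
qed

lemma zero_set_image_codeword: "zero_set R (codeword R ` Q) = R \<inter> annihilator Q"
  by (auto simp: zero_set_def codeword_def annihilator_def)

lemma ghw_eqI:
  assumes "finite R"
    and "\<And>D. D \<subseteq> C \<Longrightarrow> module.subspace fscale D \<Longrightarrow> vector_space.dim fscale D = s
           \<Longrightarrow> card (zero_set R D) \<le> z"
    and "D\<^sub>0 \<subseteq> C" and "module.subspace fscale D\<^sub>0" and "vector_space.dim fscale D\<^sub>0 = s"
    and "card (zero_set R D\<^sub>0) = z"
  shows "ghw R C s = card R - z"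
  unfolding ghw_def
proof (rule Min_eqI)
  show "finite {support_weight R D |D. D \<subseteq> C \<and> module.subspace fscale D
          \<and> vector_space.dim fscale D = s}"
    by (rule finite_subset[of _ "{..card R}"])
      (auto simp: support_weight_eq_card_diff_zero_set[OF assms(1)])
next
  show "card R - z \<in> {support_weight R D |D. D \<subseteq> C \<and> module.subspace fscale D
          \<and> vector_space.dim fscale D = s}"
    using assms(1,3-6) by (auto simp: support_weight_eq_card_diff_zero_set)
next
  fix y assume "y \<in> {support_weight R D |D. D \<subseteq> C \<and> module.subspace fscale D
          \<and> vector_space.dim fscale D = s}"
  then show "card R - z \<le> y"
    using assms(1,2) by (auto simp: support_weight_eq_card_diff_zero_set intro!: diff_le_mono2)
qed

lemma card_zero_set_le:
  fixes R :: "('a::{finite,field}^'m^'l) set"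
  assumes rep: "rep_system t R" and "1 \<le> t"
    and D: "D \<subseteq> det_code R" "module.subspace fscale D" "vector_space.dim fscale D = s"
  shows "card (zero_set R D) \<le> (\<Sum>i<CARD('l) * CARD('m) - s. CARD('a) ^ i)"
proof -
  let ?q = "CARD('a)" and ?N = "CARD('l) * CARD('m)"
  define Q where "Q = {C. codeword R C \<in> D}"
  define d where "d = vector_space.dim smat (annihilator Q)"
  have D_eq: "D = codeword R ` Q" using D(1) unfolding Q_def det_code_eq_range by auto
  have card_W: "card (annihilator Q) = ?q ^ d"
    unfolding d_def by (rule card_subspace_finite_field[OF vector_space_smat subspace_annihilator finite])
  have "card Q = card D"
    using D_eq card_image[OF inj_on_subset[OF inj_codeword[OF assms(1,2)] subset_UNIV]] by simp
  also have "\<dots> = ?q ^ s"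
    using card_subspace_finite_field[OF vector_space_fscale D(2)] D_eq D(3) by simp
  finally have "?q ^ (s + d) \<le> ?q ^ ?N"
    using card_mult_card_annihilator_le[of Q] card_W by (simp add: power_add)
  then have "d \<le> ?N - s"
    using power_le_imp_le_exp[OF card_field_gt_1] by fastforce
  then have "card (annihilator Q) \<le> ?q ^ (?N - s)"
    unfolding card_W using card_field_gt_1 by (intro power_increasing) auto
  moreover have "card (zero_set R D) * (?q - 1) \<le> card (annihilator Q) - 1"
    using card_rep_system_inter_cone(1)[OF rep, of "annihilator Q"]
    by (simp add: D_eq zero_set_image_codeword annihilator_def card_Diff_singleton)
  ultimately have "(?q - 1) * card (zero_set R D) \<le> ?q ^ (?N - s) - 1"
    by (simp add: mult.commute)
  also have "\<dots> = (?q - 1) * (\<Sum>i<?N - s. ?q ^ i)"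
    by (rule power_diff_1_eq_nat)
  finally show ?thesis using card_field_gt_1[where 'a='a] by simp
qed

lemma ex_subspace_card_zero_set_eq:
  fixes R :: "('a::{finite,field}^'m^'l) set"
  assumes rep: "rep_system t R" and "1 \<le> t" and "t \<le> CARD('l)"
    and "(CARD('l) - t) * CARD('m) \<le> s" and "s \<le> CARD('l) * CARD('m)"
  obtains D where "D \<subseteq> det_code R" "module.subspace fscale D" "vector_space.dim fscale D = s"
    "card (zero_set R D) = (\<Sum>i<CARD('l) * CARD('m) - s. CARD('a) ^ i)"
proof -
  let ?q = "CARD('a)" and ?N = "CARD('l) * CARD('m)"
  obtain T :: "'l set" where T: "card T = t"
    using ex_card[of t "UNIV :: 'l set"] assms(3) by auto
  have "?N - s \<le> card (T \<times> (UNIV :: 'm set))"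
    using assms(3,4) T by (simp add: card_cartesian_product diff_mult_distrib)
  then obtain S :: "('l \<times> 'm) set" where S: "S \<subseteq> T \<times> UNIV" "card S = ?N - s"
    using ex_card by metis
  define D where "D = codeword R ` supported_on (- S)"
  have card_D: "card D = ?q ^ s"
  proof -
    have "card (- S) = s"
      using S(2) assms(5) by (simp add: Compl_eq_Diff_UNIV card_Diff_subset)
    then show ?thesis
      using card_image[OF inj_on_subset[OF inj_codeword[OF assms(1,2)] subset_UNIV]]
      by (simp add: D_def card_supported_on)
  qed
  have sub_D: "module.subspace fscale D"
    unfolding D_def
    by (rule vector_space_pair.linear_subspace_image[OF _ linear_codeword subspace_supported_on])
      (simp add: vector_space_pair_def vector_space_smat vector_space_fscale)
  have zero_set_D: "zero_set R D = R \<inter> supported_on S"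
    by (simp add: D_def zero_set_image_codeword annihilator_supported_on)
  have "(?q - 1) * card (zero_set R D) = card (supported_on S - {0 :: 'a^'m^'l})"
    unfolding zero_set_D mult.commute[of "?q - 1"]
  proof (rule card_rep_system_inter_cone(2)[OF rep])
    show "smat c M \<in> supported_on S" if "M \<in> supported_on S" for M c
      using that by (simp add: supported_on_def smat_def)
    show "rank N \<le> t" if "N \<in> supported_on S" for N :: "'a^'m^'l"
      using rank_le_card_rows[of T N] that S(1) T by (auto simp: supported_on_def)
  qed
  also have "\<dots> = ?q ^ (?N - s) - 1"
    using card_supported_on[of S, where 'a='a] S(2) by (simp add: card_Diff_singleton supported_on_def)
  also have "\<dots> = (?q - 1) * (\<Sum>i<?N - s. ?q ^ i)"
    by (rule power_diff_1_eq_nat)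
  finally have "card (zero_set R D) = (\<Sum>i<?N - s. ?q ^ i)"
    using card_field_gt_1[where 'a='a] by simp
  moreover have "D \<subseteq> det_code R" by (auto simp: D_def det_code_eq_range)
  ultimately show ?thesis
    using that sub_D card_D dim_subspace_finite_field_eqI[OF vector_space_fscale sub_D] by simp
qed

theorem mainTheorem10:
  fixes t s :: nat and R :: "('a::{finite,field}^'m^'l) set"
  assumes "1 \<le> t" and "t \<le> CARD('l)" and "CARD('l) \<le> CARD('m)"
    and "(CARD('l) - t) * CARD('m) \<le> s" and "s \<le> CARD('l) * CARD('m)" and "1 \<le> s"
    and "rep_system t R"
  shows "int (ghw R (det_code R) s) =
           int (card (Dhat t :: ('a^'m^'l) set set))
           - (\<Sum>i<CARD('l) * CARD('m) - s. int CARD('a) ^ i)"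
proof -
  let ?G = "\<Sum>i<CARD('l) * CARD('m) - s. CARD('a) ^ i"
  obtain D\<^sub>0 where D\<^sub>0: "D\<^sub>0 \<subseteq> det_code R" "module.subspace fscale D\<^sub>0"
      "vector_space.dim fscale D\<^sub>0 = s" "card (zero_set R D\<^sub>0) = ?G"
    using ex_subspace_card_zero_set_eq[OF assms(7,1,2,4,5)] by blast
  have "ghw R (det_code R) s = card R - ?G"
    using card_zero_set_le[OF assms(7,1)] by (intro ghw_eqI[OF _ _ D\<^sub>0]) auto
  moreover have "?G \<le> card R"
    using D\<^sub>0(4) card_mono[of R "zero_set R D\<^sub>0"] by (auto simp: zero_set_def)
  moreover have "card R = card (Dhat t :: ('a^'m^'l) set set)"
    using assms(7) unfolding rep_system_def by (rule bij_betw_same_card)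
  ultimately show ?thesis by (simp add: of_nat_diff of_nat_sum)
qed

end
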